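(* Let $p$ be an odd prime, $V_p=\{2^{n-1}p^m:n,m\in\mathbb{N}\}$, and let $\mathcal{E}_p$ be the set of two-element subsets $E\subseteq V_p$ with $A_E=\{2,p\}$. (1) If $p=3$, then $\mathcal{E}_3$ consists exactly of the doubletons $\{2^{a-1}3^b,2^{a-1}3^{b+1}\}$, $\{2^{a-1}3^b,2^{a-1}3^{b+2}\}$, $\{2^{a-1}3^b,2^{a}3^{b}\}$, $\{2^{a-1}3^b,2^{a+1}3^{b}\}$, $\{2^{a-1}3^{b+1},2^{a+1}3^b\}$, $\{2^{a}3^{b},2^{a-1}3^{b+1}\}$, $\{2^{a+2}3^b,2^{a-1}3^{b+2}\}$ for $a,b\in\mathbb{N}$. (2) If $p=2^m+1>3$ is a Fermat prime, then $\mathcal{E}_p=\big\{\{2^{a-1}p^b,2^{a-1}p^{b+1}\},\{2^{a-1}p^b,2^{a}p^b\},\{2^{m+a-1}p^{b},2^{a-1}p^{b+1}\}:a,b\in\mathbb{N}\big\}$. (3) If $p=2^m-1>3$ is a Mersenne prime, then $\mathcal{E}_p=\big\{\{2^{a-1}p^b,2^{a}p^b\},\{2^{a-1}p^b,2^{m+a-1}p^b\},\{2^{a-1}p^{b+1},2^{m+a-1}p^b\}:a,b\in\mathbb{N}\big\}$. (4) If $p$ is neither a Fermat prime nor a Mersenne prime, then $\mathcal{E}_p=\big\{\{2^ap^b,2^{a-1}p^b\}:a,b\in\mathbb{N}\big\}$.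
   Context: $\mathbb{N}=\{1,2,\dots\}$, $\Pi$ the set of primes. For a nonempty finite $E\subseteq\mathbb{N}$, $A_E=\{q\in\Pi:\exists k\in\mathbb{N}\ (E\subseteq q\mathbb{Z}\cup(k+q\mathbb{Z}))\}$. A prime $p$ is a Fermat prime if $p=2^n+1$ for some $n\in\mathbb{N}$, and a Mersenne prime if $p=2^n-1$ for some $n\in\mathbb{N}$. *)

theory Defs
  imports "HOL-Computational_Algebra.Primes"
begin

text \<open>Positive naturals are represented by nat with explicit positivity guards.\<close>

definition A_set :: "nat set \<Rightarrow> nat set" where
  "A_set E = {q. prime q \<and> (\<exists>k::nat. k \<ge> 1 \<and>
       (\<forall>e\<in>E. q dvd e \<or> e mod q = k mod q))}"

definition fermat_prime :: "nat \<Rightarrow> bool" where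
  "fermat_prime p \<longleftrightarrow> prime p \<and> (\<exists>n\<ge>1. p = 2 ^ n + 1)"

definition mersenne_prime :: "nat \<Rightarrow> bool" where
  "mersenne_prime p \<longleftrightarrow> prime p \<and> (\<exists>n\<ge>1. p = 2 ^ n - 1)"

definition V_set :: "nat \<Rightarrow> nat set" where
  "V_set p = {2 ^ (n - 1) * p ^ m | n m. n \<ge> 1 \<and> m \<ge> 1}"

definition E_fam :: "nat \<Rightarrow> nat set set" where
  "E_fam p = {E. E \<subseteq> V_set p \<and> card E = 2 \<and> A_set E = {2, p}}"

end

theory Submission
  imports Defs
begin

text \<open>
  Write the two elements of E as g u > g v with g their gcd. By the definition of A_E,
  A_E = {2, p} says exactly that u - v, and hence each of the pairwise coprime numbers
  v, u - v, u, has no prime factor besides 2 and p. Parity and divisibility by p then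
  force v = 1 or u - v = 1, so E is a multiple of {n + 1, 1} or of {n + 1, n} for
  consecutive {2, p}-smooth numbers n, n + 1. The elementary cases of Catalan's equation,
  p^t + 1 = 2^k only for t = 1 and p^t = 2^k + 1 only for t = 1 or 3^2 = 2^3 + 1,
  show that these n are 1, p (when p is a Mersenne prime), p - 1 (when p is a Fermat prime)
  and 8 (when p = 3).
\<close>

section \<open>Numbers whose prime factors are 2 and p\<close>

definition two_p_smooth :: "nat \<Rightarrow> nat \<Rightarrow> bool" where
  "two_p_smooth p n \<longleftrightarrow> n \<noteq> 0 \<and> prime_factors n \<subseteq> {2, p}"

lemma two_p_smooth_iff_prime_dvd:
  "two_p_smooth p n \<longleftrightarrow> n \<noteq> 0 \<and> (\<forall>q. prime q \<longrightarrow> q dvd n \<longrightarrow> q = 2 \<or> q = p)"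
  by (auto simp: two_p_smooth_def in_prime_factors_iff)

lemma two_p_smooth_mult:
  "two_p_smooth p a \<Longrightarrow> two_p_smooth p b \<Longrightarrow> two_p_smooth p (a * b)"
  by (simp add: two_p_smooth_def prime_factors_product)

lemma two_p_smooth_dvd:
  "two_p_smooth p b \<Longrightarrow> a dvd b \<Longrightarrow> two_p_smooth p a"
  unfolding two_p_smooth_def by (metis dvd_0_left dvd_prime_factors order_trans)

lemma two_p_smooth_prime_power:
  "prime q \<Longrightarrow> q = 2 \<or> q = p \<Longrightarrow> two_p_smooth p (q ^ n)"
  by (auto simp: two_p_smooth_def prime_factorization_prime_power prime_gt_0_nat)

lemma two_p_smooth_iff:
  assumes "prime p" "p \<noteq> 2"
  shows "two_p_smooth p n \<longleftrightarrow> (\<exists>s t. n = 2 ^ s * p ^ t)"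
proof
  assume n: "two_p_smooth p n"
  then have "n = (\<Prod>q\<in>prime_factors n. q ^ multiplicity q n)"
    by (simp add: two_p_smooth_def prod_prime_factors)
  also have "\<dots> = (\<Prod>q\<in>{2, p}. q ^ multiplicity q n)"
    using n assms(1) by (intro prod.mono_neutral_left)
      (auto simp: two_p_smooth_def prime_factors_multiplicity)
  also have "\<dots> = 2 ^ multiplicity 2 n * p ^ multiplicity p n"
    using assms by simp
  finally show "\<exists>s t. n = 2 ^ s * p ^ t" by blast
next
  assume "\<exists>s t. n = 2 ^ s * p ^ t"
  then obtain s t where "n = 2 ^ s * p ^ t" by blast
  then show "two_p_smooth p n"
    using assms(1) by (simp add: two_p_smooth_mult two_p_smooth_prime_power)
qed

lemma two_p_smooth_odd:
  assumes "prime p" "odd p" "two_p_smooth p n" "odd n"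
  obtains t where "n = p ^ t"
proof -
  have "p \<noteq> 2" using assms(2) by auto
  then obtain s t where n: "n = 2 ^ s * p ^ t"
    using two_p_smooth_iff[OF assms(1)] assms(3) by blast
  with assms(4) have "s = 0" by (cases s) auto
  with n that show thesis by simp
qed

lemma two_p_smooth_not_dvd:
  assumes "prime p" "odd p" "two_p_smooth p n" "\<not> p dvd n"
  obtains s where "n = 2 ^ s"
proof -
  have "p \<noteq> 2" using assms(2) by auto
  then obtain s t where n: "n = 2 ^ s * p ^ t"
    using two_p_smooth_iff[OF assms(1)] assms(3) by blast
  with assms(4) have "t = 0" by (cases t) auto
  with n that show thesis by simp
qed

lemma two_p_smooth_eq_one:
  assumes "prime p" "odd p" "two_p_smooth p n" "odd n" "\<not> p dvd n"
  shows "n = 1"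
proof -
  obtain s where "n = 2 ^ s" using two_p_smooth_not_dvd assms(1-3,5) by blast
  with assms(4) show ?thesis by (cases s) auto
qed

section \<open>Powers of two differing from a power of an odd number by one\<close>

lemma odd_dvd_power_two:
  assumes "odd (w::nat)" "w dvd 2 ^ k"
  shows "w = 1"
proof -
  obtain i where "w = 2 ^ i"
    using assms(2) divides_primepow_nat[OF two_is_prime_nat] by blast
  with assms(1) show ?thesis by (cases i) auto
qed

lemma pred_dvd_power_pred: "x - 1 dvd x ^ n - (1::nat)"
proof (induction n)
  case (Suc n)
  show ?case
  proof (cases "x = 0")
    case False
    then have "x ^ Suc n - 1 = x * (x ^ n - 1) + (x - 1)"
      by (simp add: algebra_simps diff_mult_distrib2 Suc_le_eq)
    with Suc.IH show ?thesis by simp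
  qed simp
qed simp

lemma odd_exponent_cofactors:
  assumes "0 < (x::nat)" "odd t"
  obtains w v where "odd w" "x ^ t + 1 = (x + 1) * w" "odd v" "x ^ t - 1 = (x - 1) * v"
proof -
  obtain j where t: "t = Suc (2 * j)" using assms(2) oddE by fastforce
  obtain r where x: "x = Suc r" using assms(1) gr0_implies_Suc by blast
  obtain Q where Q: "(x ^ 2) ^ j - 1 = (x ^ 2 - 1) * Q"
    using pred_dvd_power_pred by blast
  have "x ^ 2 - 1 = r * (r + 2)"
    using x by (simp add: power2_eq_square algebra_simps)
  with Q have "(x ^ 2) ^ j - 1 = r * (r + 2) * Q"
    by simp
  moreover have "0 < (x ^ 2) ^ j"
    using assms(1) by simp
  ultimately have "(x ^ 2) ^ j = 1 + r * (r + 2) * Q"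
    by linarith
  moreover have "x ^ t = x * (x ^ 2) ^ j"
    using t by (simp add: power_mult)
  ultimately have "x ^ t = x * (1 + r * (r + 2) * Q)"
    by simp
  then have "x ^ t + 1 = (x + 1) * (1 + x * r * Q)" "x ^ t - 1 = (x - 1) * (1 + x * (r + 2) * Q)"
    using x by (simp_all add: algebra_simps)
  \<comment> \<open>x * r and x * (r + 2) are products of two consecutive numbers\<close>
  moreover have "odd (1 + x * r * Q)" "odd (1 + x * (r + 2) * Q)"
    using x by simp_all
  ultimately show thesis using that by blast
qed

lemma power_two_plus_two_eq_power_two:
  assumes "2 ^ u + 2 = (2::nat) ^ w"
  shows "u = 1"
proof (rule ccontr)
  assume "u \<noteq> 1"
  then consider "u = 0" | k where "u = Suc k" "0 < k" by (cases u) auto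
  then show False
  proof cases
    case 1
    then have "(2::nat) ^ w = 3" using assms by simp
    then have "3 dvd (2::nat) ^ w" by simp
    then have "(3::nat) = 1" by (rule odd_dvd_power_two[rotated]) simp
    then show False by simp
  next
    case 2
    then have w: "2 ^ w = 2 * (2 ^ k + 1::nat)" using assms by simp
    have "2 ^ k + 1 dvd (2::nat) ^ w" unfolding w by (rule dvd_triv_right)
    then have "2 ^ k + 1 = (1::nat)" by (rule odd_dvd_power_two[rotated]) (use \<open>0 < k\<close> in simp)
    then show False by simp
  qed
qed

lemma power_plus_one_eq_power_two:
  assumes "odd (p::nat)" "1 < p" "0 < t" "p ^ t + 1 = 2 ^ k"
  shows "t = 1"
proof (cases "even t")
  case True
  then obtain j where j: "t = 2 * j" "0 < j" using assms(3) by fastforce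
  have "odd (p ^ j)" using assms(1) by simp
  then obtain i where i: "p ^ j = 2 * i + 1" by (rule oddE)
  have k: "2 ^ k = 2 * (2 * (i * i + i) + 1)"
    using assms(4) i j by (simp add: power_mult power2_eq_square algebra_simps)
  have "2 * (i * i + i) + 1 dvd 2 ^ k" unfolding k by (rule dvd_triv_right)
  then have "2 * (i * i + i) + 1 = 1" by (rule odd_dvd_power_two[rotated]) simp
  then have "p ^ j = 1" using i by simp
  with j assms(2) show ?thesis by simp
next
  case False
  then obtain w where w: "odd w" "p ^ t + 1 = (p + 1) * w"
    using odd_exponent_cofactors[of p t] assms(2) by auto
  then have k: "2 ^ k = (p + 1) * w" using assms(4) by simp
  have "w dvd 2 ^ k" unfolding k by (rule dvd_triv_right)
  with w(1) have "w = 1" by (rule odd_dvd_power_two)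
  with w(2) have "p ^ t = p ^ 1" by simp
  then show ?thesis using power_inject_exp[OF assms(2)] by blast
qed

lemma power_eq_power_two_plus_one:
  assumes "odd (p::nat)" "1 < p" "0 < t" "p ^ t = 2 ^ k + 1"
  shows "t = 1 \<or> (p = 3 \<and> t = 2 \<and> k = 3)"
proof (cases "even t")
  case True
  then obtain j where j: "t = 2 * j" "0 < j" using assms(3) by fastforce
  define q where "q = p ^ j"
  have "1 < q" using one_less_power[OF assms(2) j(2)] by (simp add: q_def)
  have k: "2 ^ k = (q - 1) * (q + 1)"
    using assms(4) j by (simp add: q_def power_mult power2_eq_square algebra_simps)
  have "q - 1 dvd 2 ^ k" "q + 1 dvd 2 ^ k"
    unfolding k by (simp_all only: dvd_triv_left dvd_triv_right)
  then obtain a b where a: "q - 1 = 2 ^ a" and b: "q + 1 = 2 ^ b"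
    using divides_primepow_nat[OF two_is_prime_nat] by meson
  with \<open>1 < q\<close> have "2 ^ a + 2 = (2::nat) ^ b" by simp
  then have "a = 1" by (rule power_two_plus_two_eq_power_two)
  with a \<open>1 < q\<close> have "q = 3" by simp
  then have "p dvd 3" using j(2) unfolding q_def by (metis dvd_power)
  then have "p = 3" using assms(2) prime_nat_iff[of 3] by auto
  with \<open>q = 3\<close> have "j = 1" using power_inject_exp[of "3::nat" j 1] by (simp add: q_def)
  with assms(4) \<open>p = 3\<close> j have "2 ^ k = (2::nat) ^ 3" by simp
  then have "k = 3" using power_inject_exp[of "2::nat" k 3] by simp
  with \<open>p = 3\<close> \<open>j = 1\<close> j show ?thesis by simp
next
  case False
  then obtain v where v: "odd v" "p ^ t - 1 = (p - 1) * v"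
    using odd_exponent_cofactors[of p t] assms(2) by auto
  then have k: "2 ^ k = (p - 1) * v" using assms(4) by simp
  have "v dvd 2 ^ k" unfolding k by (rule dvd_triv_right)
  with v(1) have "v = 1" by (rule odd_dvd_power_two)
  with v(2) have "p ^ t - 1 = p - 1" by simp
  then have "p ^ t = p ^ 1" using assms(2) by (simp add: one_le_power)
  then show ?thesis using power_inject_exp[OF assms(2)] by blast
qed

section \<open>Smooth solutions of v + w = u\<close>

lemma consecutive_two_p_smooth_even:
  assumes p: "prime p" "odd p" and "even n"
    and smooth: "two_p_smooth p n" "two_p_smooth p (n + 1)"
  shows "(n = p - 1 \<and> (\<exists>k. p - 1 = 2 ^ k)) \<or> (p = 3 \<and> n = 8)"
proof -
  have "1 < p" using p(1) prime_gt_1_nat by blast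
  have "odd (n + 1)" using \<open>even n\<close> by simp
  then obtain t where t: "n + 1 = p ^ t" using two_p_smooth_odd[OF p] smooth(2) by blast
  have "0 < n" using smooth(1) by (simp add: two_p_smooth_def)
  with t have "0 < t" by (cases t) auto
  then have "p dvd n + 1" unfolding t by (simp add: dvd_power)
  then have "\<not> p dvd n" using \<open>1 < p\<close> dvd_add_right_iff[of p n 1] by auto
  then obtain s where s: "n = 2 ^ s" using two_p_smooth_not_dvd[OF p] smooth(1) by blast
  have "p ^ t = 2 ^ s + 1" using s t by simp
  then have "t = 1 \<or> (p = 3 \<and> t = 2 \<and> s = 3)"
    using power_eq_power_two_plus_one p(2) \<open>1 < p\<close> \<open>0 < t\<close> by blast
  then show ?thesis using s t by auto
qed

lemma consecutive_two_p_smooth_odd: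
  assumes p: "prime p" "odd p" and "odd n"
    and smooth: "two_p_smooth p n" "two_p_smooth p (n + 1)"
  shows "n = 1 \<or> (n = p \<and> (\<exists>k. p + 1 = 2 ^ k))"
proof -
  have "1 < p" using p(1) prime_gt_1_nat by blast
  obtain i where i: "n = p ^ i" using two_p_smooth_odd[OF p] smooth(1) \<open>odd n\<close> by blast
  show ?thesis
  proof (cases "i = 0")
    case False
    then have "p dvd n" unfolding i by (simp add: dvd_power)
    then have "\<not> p dvd n + 1" using \<open>1 < p\<close> dvd_add_right_iff[of p n 1] by auto
    then obtain k where k: "n + 1 = 2 ^ k" using two_p_smooth_not_dvd[OF p] smooth(2) by blast
    then have "i = 1"
      using power_plus_one_eq_power_two p(2) \<open>1 < p\<close> False i by blast
    with i k show ?thesis by auto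
  qed (use i in simp)
qed

lemma consecutive_two_p_smooth_iff:
  assumes p: "prime p" "odd p"
  shows "two_p_smooth p n \<and> two_p_smooth p (n + 1) \<longleftrightarrow>
    n = 1 \<or> (n = p \<and> (\<exists>k. p + 1 = 2 ^ k)) \<or> (n = p - 1 \<and> (\<exists>k. p - 1 = 2 ^ k)) \<or>
    (p = 3 \<and> n = 8)"
    (is "?smooth \<longleftrightarrow> ?solution")
proof
  assume ?smooth
  then show ?solution
    using consecutive_two_p_smooth_even[OF p] consecutive_two_p_smooth_odd[OF p] by blast
next
  have smooth_power_two: "two_p_smooth p (2 ^ k)" for k
    by (simp add: two_p_smooth_prime_power)
  have smooth_p_power: "two_p_smooth p (p ^ k)" for k
    using p(1) by (simp add: two_p_smooth_prime_power)
  assume ?solution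
  then show ?smooth
  proof (elim disjE conjE exE)
    assume "n = 1"
    then show ?smooth using smooth_power_two[of 0] smooth_power_two[of 1] by (simp add: numeral_2_eq_2)
  next
    fix k assume "n = p" "p + 1 = 2 ^ k"
    then show ?smooth using smooth_power_two[of k] smooth_p_power[of 1] by simp
  next
    fix k assume "n = p - 1" "p - 1 = 2 ^ k"
    then have "n = 2 ^ k" "n + 1 = p" using prime_gt_0_nat[OF p(1)] by simp_all
    then show ?smooth using smooth_power_two[of k] smooth_p_power[of 1] by simp
  next
    assume "p = 3" "n = 8"
    then show ?smooth using smooth_power_two[of 3] smooth_p_power[of 2] by simp
  qed
qed

lemma coprime_two_p_smooth_sum:
  assumes p: "prime p" "odd p"
    and coprime: "coprime v w"
    and smooth: "two_p_smooth p v" "two_p_smooth p w" "two_p_smooth p (v + w)"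
  shows "v = 1 \<or> w = 1"
proof -
  have "0 < v" "0 < w" using smooth by (auto simp: two_p_smooth_def)
  have not_common: False if "q dvd v" "q dvd w" "prime q" for q
    using coprime_common_divisor[OF coprime that(1,2)] that(3) by simp
  show ?thesis
  proof (cases "even (v + w)")
    case True
    then have "odd v" "odd w" using not_common[of 2] by auto
    then obtain i j where ij: "v = p ^ i" "w = p ^ j"
      using two_p_smooth_odd[OF p] smooth by metis
    have "i = 0 \<or> j = 0"
    proof (rule ccontr)
      assume "\<not> (i = 0 \<or> j = 0)"
      then have "p dvd v" "p dvd w" using ij by (simp_all add: dvd_power)
      then show False using not_common p(1) by blast
    qed
    with ij show ?thesis by auto
  next
    case False
    have "p dvd v + w"
      using two_p_smooth_eq_one[OF p smooth(3) False] \<open>0 < v\<close> \<open>0 < w\<close> by linarith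
    then have "\<not> p dvd v" "\<not> p dvd w"
      using not_common[of p] p(1) by (auto simp: dvd_add_right_iff dvd_add_left_iff)
    moreover have "odd v \<or> odd w" using False by auto
    ultimately show ?thesis using two_p_smooth_eq_one[OF p] smooth(1,2) by blast
  qed
qed

section \<open>The doubletons with A_E = {2, p}\<close>

lemma V_set_iff:
  assumes p: "prime p" "odd p"
  shows "x \<in> V_set p \<longleftrightarrow> two_p_smooth p x \<and> p dvd x"
proof
  assume "x \<in> V_set p"
  then obtain n m where x: "x = 2 ^ (n - 1) * p ^ m" "m \<ge> 1" unfolding V_set_def by blast
  then have "p dvd x" by (simp add: dvd_power)
  moreover have "two_p_smooth p x"
    unfolding x(1) using p(1) by (simp add: two_p_smooth_mult two_p_smooth_prime_power)
  ultimately show "two_p_smooth p x \<and> p dvd x" by blast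
next
  assume x: "two_p_smooth p x \<and> p dvd x"
  have "p \<noteq> 2" using p(2) by auto
  then obtain s t where st: "x = 2 ^ s * p ^ t" using x two_p_smooth_iff[OF p(1)] by blast
  have "t \<noteq> 0"
  proof
    assume "t = 0"
    then have "p dvd 2" using x st p(1) prime_dvd_power by auto
    then have "p = 2" using primes_dvd_imp_eq[OF p(1) two_is_prime_nat] by blast
    with p(2) show False by simp
  qed
  then have "x = 2 ^ (Suc s - 1) * p ^ t \<and> Suc s \<ge> 1 \<and> t \<ge> 1" using st by simp
  then show "x \<in> V_set p" unfolding V_set_def by blast
qed

lemma A_set_doubleton:
  assumes "0 < y" "y < x"
  shows "A_set {x, y} = {q. prime q \<and> (q dvd x \<or> q dvd y \<or> q dvd x - y)}"
proof -
  have "(\<exists>k\<ge>1. (q dvd x \<or> x mod q = k mod q) \<and> (q dvd y \<or> y mod q = k mod q)) \<longleftrightarrow>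
      q dvd x \<or> q dvd y \<or> x mod q = y mod q" for q
  proof
    assume q: "q dvd x \<or> q dvd y \<or> x mod q = y mod q"
    show "\<exists>k\<ge>1. (q dvd x \<or> x mod q = k mod q) \<and> (q dvd y \<or> y mod q = k mod q)"
    proof (cases "q dvd x")
      case True
      then show ?thesis using assms by (intro exI[of _ y]) auto
    next
      case False
      then show ?thesis using assms q by (intro exI[of _ x]) auto
    qed
  qed auto
  moreover have "x mod q = y mod q \<longleftrightarrow> q dvd x - y" for q
    using assms(2) by (simp add: mod_eq_dvd_iff_nat)
  ultimately show ?thesis unfolding A_set_def by auto
qed

lemma A_set_doubleton_eq_iff:
  assumes p: "prime p" "odd p" and xy: "x \<in> V_set p" "y \<in> V_set p" "y < x"
  shows "A_set {x, y} = {2, p} \<longleftrightarrow> two_p_smooth p (x - y)"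
proof -
  have smooth: "two_p_smooth p x" "two_p_smooth p y" and "p dvd x"
    using xy V_set_iff[OF p] by auto
  have "0 < y" using smooth by (simp add: two_p_smooth_def)
  note A = A_set_doubleton[OF this xy(3)]
  have "even x \<or> even y \<or> even (x - y)" by (auto simp: even_diff_nat)
  then have "2 \<in> A_set {x, y}" unfolding A by auto
  moreover have "p \<in> A_set {x, y}" unfolding A using p(1) \<open>p dvd x\<close> by blast
  moreover have "q \<in> {2, p}" if "prime q" "q dvd x \<or> q dvd y" for q
    using that smooth by (auto simp: two_p_smooth_iff_prime_dvd)
  ultimately show ?thesis
    unfolding A two_p_smooth_iff_prime_dvd using xy(3) by auto
qed

lemma doubleton_mult_in_E_fam:
  assumes p: "prime p" "odd p" and "g \<in> V_set p" "v < u"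
    and smooth: "two_p_smooth p u" "two_p_smooth p v" "two_p_smooth p (u - v)"
  shows "{g * u, g * v} \<in> E_fam p"
proof -
  have g: "two_p_smooth p g" "p dvd g" using assms(3) V_set_iff[OF p] by auto
  then have "0 < g" by (simp add: two_p_smooth_def)
  have V: "g * u \<in> V_set p" "g * v \<in> V_set p"
    using g smooth(1,2) by (simp_all add: V_set_iff[OF p] two_p_smooth_mult)
  have "g * v < g * u" using \<open>0 < g\<close> \<open>v < u\<close> by simp
  moreover have "two_p_smooth p (g * u - g * v)"
    using g(1) smooth(3) by (simp add: two_p_smooth_mult diff_mult_distrib2[symmetric])
  ultimately have "A_set {g * u, g * v} = {2, p}"
    using A_set_doubleton_eq_iff[OF p V] by blast
  moreover have "card {g * u, g * v} = 2" using \<open>g * v < g * u\<close> by simp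
  ultimately show ?thesis using V unfolding E_fam_def by blast
qed

lemma E_fam_gcd_decomposition:
  assumes p: "prime p" "odd p" and "E \<in> E_fam p"
  obtains g u v where "g \<in> V_set p" "E = {g * u, g * v}" "v < u" "coprime u v"
    "two_p_smooth p u" "two_p_smooth p v" "two_p_smooth p (u - v)"
proof -
  have E: "E \<subseteq> V_set p" "card E = 2" "A_set E = {2, p}"
    using assms(3) unfolding E_fam_def by auto
  then obtain a b where "E = {a, b}" "a \<noteq> b" by (auto simp: card_2_iff)
  then obtain x y where xy: "E = {x, y}" "y < x"
    by (metis insert_commute linorder_neqE_nat)
  then have V: "x \<in> V_set p" "y \<in> V_set p" using E(1) by auto
  then have smooth: "two_p_smooth p x" "two_p_smooth p y" "two_p_smooth p (x - y)"
    using E(3) xy A_set_doubleton_eq_iff[OF p V xy(2)] V_set_iff[OF p] by auto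
  define g where "g = gcd x y"
  define u where "u = x div g"
  define v where "v = y div g"
  have x: "x = g * u" and y: "y = g * v" by (simp_all add: g_def u_def v_def)
  have "g \<in> V_set p"
    using V V_set_iff[OF p] two_p_smooth_dvd[OF smooth(1)] by (auto simp: g_def)
  moreover have "coprime u v"
    using xy(2) div_gcd_coprime[of x y] by (simp add: g_def u_def v_def)
  moreover have "v < u" using xy(2) x y by simp
  moreover have "two_p_smooth p u" "two_p_smooth p v"
    using smooth x y two_p_smooth_dvd by auto
  moreover have "two_p_smooth p (u - v)"
    using smooth(3) x y two_p_smooth_dvd by (simp add: diff_mult_distrib2[symmetric])
  ultimately show thesis using that xy(1) x y by blast
qed

lemma E_fam_consecutive_multiple:
  assumes p: "prime p" "odd p" and "E \<in> E_fam p"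
  obtains g n where "g \<in> V_set p" "two_p_smooth p n" "two_p_smooth p (n + 1)"
    "E = {g * (n + 1), g * 1} \<or> E = {g * (n + 1), g * n}"
proof -
  obtain g u v where g: "g \<in> V_set p" and E: "E = {g * u, g * v}" and "v < u" "coprime u v"
    and smooth: "two_p_smooth p u" "two_p_smooth p v" "two_p_smooth p (u - v)"
    using E_fam_gcd_decomposition[OF p assms(3)] by blast
  have "coprime v (u - v)"
    using gcd_diff1_nat[of v u] \<open>v < u\<close> \<open>coprime u v\<close> by (simp add: coprime_iff_gcd_eq_1 gcd.commute)
  then have "v = 1 \<or> u - v = 1"
    using coprime_two_p_smooth_sum[OF p, of v "u - v"] \<open>v < u\<close> smooth by simp
  then show thesis
  proof
    assume "v = 1"
    moreover have "u = (u - 1) + 1" using \<open>v < u\<close> by simp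
    ultimately show thesis using that[of g "u - 1"] g E smooth by simp
  next
    assume "u - v = 1"
    then have "u = v + 1" using \<open>v < u\<close> by simp
    then show thesis using that[of g v] g E smooth by simp
  qed
qed

definition pair_multiples :: "nat \<Rightarrow> nat \<Rightarrow> nat \<Rightarrow> nat set set" where
  "pair_multiples p u v = {{g * u, g * v} | g. g \<in> V_set p}"

lemma E_fam_eq_UN_consecutive:
  assumes p: "prime p" "odd p"
  shows "E_fam p = (\<Union>n \<in> {n. two_p_smooth p n \<and> two_p_smooth p (n + 1)}.
    pair_multiples p (n + 1) 1 \<union> pair_multiples p (n + 1) n)"
proof (intro equalityI subsetI)
  fix E assume "E \<in> E_fam p"
  then obtain g n where "g \<in> V_set p" "two_p_smooth p n" "two_p_smooth p (n + 1)"
    "E = {g * (n + 1), g * 1} \<or> E = {g * (n + 1), g * n}"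
    by (rule E_fam_consecutive_multiple[OF p])
  then show "E \<in> (\<Union>n \<in> {n. two_p_smooth p n \<and> two_p_smooth p (n + 1)}.
    pair_multiples p (n + 1) 1 \<union> pair_multiples p (n + 1) n)"
    unfolding pair_multiples_def by blast
next
  fix E assume "E \<in> (\<Union>n \<in> {n. two_p_smooth p n \<and> two_p_smooth p (n + 1)}.
    pair_multiples p (n + 1) 1 \<union> pair_multiples p (n + 1) n)"
  then obtain n g where n: "two_p_smooth p n" "two_p_smooth p (n + 1)" and g: "g \<in> V_set p"
    and E: "E = {g * (n + 1), g * 1} \<or> E = {g * (n + 1), g * n}"
    unfolding pair_multiples_def by blast
  have "0 < n" using n(1) by (simp add: two_p_smooth_def)
  have one: "two_p_smooth p 1" using two_p_smooth_prime_power[of 2 p 0] by simp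
  from E show "E \<in> E_fam p"
  proof
    assume "E = {g * (n + 1), g * 1}"
    then show ?thesis using doubleton_mult_in_E_fam[OF p g, of 1 "n + 1"] n one \<open>0 < n\<close> by simp
  next
    assume "E = {g * (n + 1), g * n}"
    then show ?thesis using doubleton_mult_in_E_fam[OF p g, of n "n + 1"] n one by simp
  qed
qed

text \<open>F is specified at Suc a, so that the exponent a - 1 of the statement
  never meets truncated subtraction.\<close>

lemma pair_multiples_eqI:
  assumes F: "\<And>a b. b \<ge> 1 \<Longrightarrow> F (Suc a) b = {2 ^ a * p ^ b * u, 2 ^ a * p ^ b * v}"
  shows "{F a b | a b. a \<ge> 1 \<and> b \<ge> 1} = pair_multiples p u v"
proof (intro equalityI subsetI)
  fix E assume "E \<in> {F a b | a b. a \<ge> 1 \<and> b \<ge> 1}"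
  then obtain a b where E: "E = F (Suc a) b" and "b \<ge> 1" by (auto simp: Suc_le_eq dest: gr0_implies_Suc)
  have "2 ^ a * p ^ b \<in> V_set p"
    unfolding V_set_def using \<open>b \<ge> 1\<close> by (intro CollectI exI[of _ "Suc a"] exI[of _ b]) simp
  with E F[OF \<open>b \<ge> 1\<close>] show "E \<in> pair_multiples p u v"
    unfolding pair_multiples_def by blast
next
  fix E assume "E \<in> pair_multiples p u v"
  then obtain a b where "E = {2 ^ (a - 1) * p ^ b * u, 2 ^ (a - 1) * p ^ b * v}" "a \<ge> 1" "b \<ge> 1"
    unfolding pair_multiples_def V_set_def by auto
  with F[of b "a - 1"] have "E = F a b" by simp
  with \<open>a \<ge> 1\<close> \<open>b \<ge> 1\<close> show "E \<in> {F a b | a b. a \<ge> 1 \<and> b \<ge> 1}" by blast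
qed

lemma consecutive_two_p_smooth_three:
  "{n. two_p_smooth 3 n \<and> two_p_smooth 3 (n + 1)} = {1, 2, 3, 8}"
proof -
  have three: "prime (3::nat)" "odd (3::nat)" by simp_all
  have "\<exists>k. (3::nat) + 1 = 2 ^ k" by (rule exI[of _ 2]) simp
  moreover have "\<exists>k. (3::nat) - 1 = 2 ^ k" by (rule exI[of _ 1]) simp
  ultimately show ?thesis
    unfolding set_eq_iff mem_Collect_eq consecutive_two_p_smooth_iff[OF three] by auto
qed

lemma E_fam_three:
  "E_fam 3 =
       {{2^(a-1)*3^b, 2^(a-1)*3^(b+1)} | a b. a \<ge> 1 \<and> b \<ge> 1}
     \<union> {{2^(a-1)*3^b, 2^(a-1)*3^(b+2)} | a b. a \<ge> 1 \<and> b \<ge> 1}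
     \<union> {{2^(a-1)*3^b, 2^a*3^b} | a b. a \<ge> 1 \<and> b \<ge> 1}
     \<union> {{2^(a-1)*3^b, 2^(a+1)*3^b} | a b. a \<ge> 1 \<and> b \<ge> 1}
     \<union> {{2^(a-1)*3^(b+1), 2^(a+1)*3^b} | a b. a \<ge> 1 \<and> b \<ge> 1}
     \<union> {{2^a*3^b, 2^(a-1)*3^(b+1)} | a b. a \<ge> 1 \<and> b \<ge> 1}
     \<union> {{2^(a+2)*3^b, 2^(a-1)*3^(b+2)} | a b. a \<ge> 1 \<and> b \<ge> 1}"
proof -
  have F1: "{{2^(a-1)*3^b, 2^(a-1)*3^(b+1)} | a b. a \<ge> 1 \<and> b \<ge> 1} = pair_multiples 3 3 1"
    by (rule pair_multiples_eqI) (simp add: insert_commute mult_ac)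
  have F2: "{{2^(a-1)*3^b, 2^(a-1)*3^(b+2)} | a b. a \<ge> 1 \<and> b \<ge> 1} = pair_multiples 3 9 1"
    by (rule pair_multiples_eqI) (simp add: insert_commute mult_ac)
  have F3: "{{2^(a-1)*3^b, 2^a*3^b} | a b. a \<ge> 1 \<and> b \<ge> 1} = pair_multiples 3 2 1"
    by (rule pair_multiples_eqI) (simp add: insert_commute mult_ac)
  have F4: "{{2^(a-1)*3^b, 2^(a+1)*3^b} | a b. a \<ge> 1 \<and> b \<ge> 1} = pair_multiples 3 4 1"
    by (rule pair_multiples_eqI) (simp add: insert_commute mult_ac)
  have F5: "{{2^(a-1)*3^(b+1), 2^(a+1)*3^b} | a b. a \<ge> 1 \<and> b \<ge> 1} = pair_multiples 3 4 3"
    by (rule pair_multiples_eqI) (simp add: insert_commute mult_ac)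
  have F6: "{{2^a*3^b, 2^(a-1)*3^(b+1)} | a b. a \<ge> 1 \<and> b \<ge> 1} = pair_multiples 3 3 2"
    by (rule pair_multiples_eqI) (simp add: insert_commute mult_ac)
  have F7: "{{2^(a+2)*3^b, 2^(a-1)*3^(b+2)} | a b. a \<ge> 1 \<and> b \<ge> 1} = pair_multiples 3 9 8"
    by (rule pair_multiples_eqI) (simp add: insert_commute mult_ac)
  have three: "prime (3::nat)" "odd (3::nat)" by simp_all
  show ?thesis
    unfolding F1 F2 F3 F4 F5 F6 F7 E_fam_eq_UN_consecutive[OF three] consecutive_two_p_smooth_three
      UN_insert UN_empty one_add_one
    by (simp add: Un_ac)
qed

lemma consecutive_two_p_smooth_fermat:
  assumes "prime p" "p = 2 ^ m + 1" "3 < p"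
  shows "{n. two_p_smooth p n \<and> two_p_smooth p (n + 1)} = {1, 2 ^ m}"
proof -
  have "0 < m" using assms(2,3) by (cases m) auto
  then have "odd p" using assms(2) by simp
  have "\<not> (\<exists>k. p + 1 = 2 ^ k)"
  proof
    assume "\<exists>k. p + 1 = 2 ^ k"
    then obtain k where "2 ^ m + 2 = (2::nat) ^ k" using assms(2) by auto
    then have "m = 1" by (rule power_two_plus_two_eq_power_two)
    with assms show False by simp
  qed
  then show ?thesis
    using assms unfolding set_eq_iff mem_Collect_eq consecutive_two_p_smooth_iff[OF assms(1) \<open>odd p\<close>]
    by auto
qed

lemma E_fam_fermat:
  assumes "prime p" "p = 2 ^ m + 1" "3 < p"
  shows "E_fam p =
       {{2^(a-1)*p^b, 2^(a-1)*p^(b+1)} | a b. a \<ge> 1 \<and> b \<ge> 1}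
     \<union> {{2^(a-1)*p^b, 2^a*p^b} | a b. a \<ge> 1 \<and> b \<ge> 1}
     \<union> {{2^(m+a-1)*p^b, 2^(a-1)*p^(b+1)} | a b. a \<ge> 1 \<and> b \<ge> 1}"
proof -
  have "odd p" using assms(2,3) by (cases m) auto
  have F1: "{{2^(a-1)*p^b, 2^(a-1)*p^(b+1)} | a b. a \<ge> 1 \<and> b \<ge> 1} = pair_multiples p p 1"
    by (rule pair_multiples_eqI) (simp add: insert_commute mult_ac)
  have F2: "{{2^(a-1)*p^b, 2^a*p^b} | a b. a \<ge> 1 \<and> b \<ge> 1} = pair_multiples p 2 1"
    by (rule pair_multiples_eqI) (simp add: insert_commute mult_ac)
  have F3: "{{2^(m+a-1)*p^b, 2^(a-1)*p^(b+1)} | a b. a \<ge> 1 \<and> b \<ge> 1} = pair_multiples p p (2^m)"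
    by (rule pair_multiples_eqI) (simp add: insert_commute mult_ac power_add)
  show ?thesis
    unfolding F1 F2 F3 E_fam_eq_UN_consecutive[OF assms(1) \<open>odd p\<close>]
      consecutive_two_p_smooth_fermat[OF assms] UN_insert UN_empty assms(2)[symmetric] one_add_one
    by (simp add: Un_ac)
qed

lemma consecutive_two_p_smooth_mersenne:
  assumes "prime p" "p = 2 ^ m - 1" "3 < p"
  shows "{n. two_p_smooth p n \<and> two_p_smooth p (n + 1)} = {1, p}"
proof -
  have p1: "p + 1 = 2 ^ m" using assms(2,3) by simp
  then have "0 < m" using assms(3) by (cases m) auto
  then have "even (p + 1)" using p1 by simp
  then have "odd p" by simp
  have "\<not> (\<exists>k. p - 1 = 2 ^ k)"
  proof
    assume "\<exists>k. p - 1 = 2 ^ k"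
    then obtain k where "p - 1 = 2 ^ k" by blast
    then have "2 ^ k + 2 = (2::nat) ^ m" using p1 assms(3) by linarith
    then have "k = 1" by (rule power_two_plus_two_eq_power_two)
    with \<open>2 ^ k + 2 = 2 ^ m\<close> p1 assms(3) show False by simp
  qed
  then show ?thesis
    using p1 assms(3) unfolding set_eq_iff mem_Collect_eq consecutive_two_p_smooth_iff[OF assms(1) \<open>odd p\<close>]
    by auto
qed

lemma E_fam_mersenne:
  assumes "prime p" "p = 2 ^ m - 1" "3 < p"
  shows "E_fam p =
       {{2^(a-1)*p^b, 2^a*p^b} | a b. a \<ge> 1 \<and> b \<ge> 1}
     \<union> {{2^(a-1)*p^b, 2^(m+a-1)*p^b} | a b. a \<ge> 1 \<and> b \<ge> 1}
     \<union> {{2^(a-1)*p^(b+1), 2^(m+a-1)*p^b} | a b. a \<ge> 1 \<and> b \<ge> 1}"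
proof -
  have p1: "p + 1 = 2 ^ m" using assms(2,3) by simp
  moreover have "m \<noteq> 0" using p1 assms(3) by (cases m) auto
  ultimately have "even (p + 1)" by simp
  then have "odd p" by simp
  have F1: "{{2^(a-1)*p^b, 2^a*p^b} | a b. a \<ge> 1 \<and> b \<ge> 1} = pair_multiples p 2 1"
    by (rule pair_multiples_eqI) (simp add: insert_commute mult_ac)
  have F2: "{{2^(a-1)*p^b, 2^(m+a-1)*p^b} | a b. a \<ge> 1 \<and> b \<ge> 1} = pair_multiples p (p + 1) 1"
    unfolding p1 by (rule pair_multiples_eqI) (simp add: insert_commute mult_ac power_add)
  have F3: "{{2^(a-1)*p^(b+1), 2^(m+a-1)*p^b} | a b. a \<ge> 1 \<and> b \<ge> 1} = pair_multiples p (p + 1) p"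
    unfolding p1 by (rule pair_multiples_eqI) (simp add: insert_commute mult_ac power_add)
  show ?thesis
    unfolding F1 F2 F3 E_fam_eq_UN_consecutive[OF assms(1) \<open>odd p\<close>]
      consecutive_two_p_smooth_mersenne[OF assms] UN_insert UN_empty one_add_one
    by (simp add: Un_ac)
qed

lemma consecutive_two_p_smooth_generic:
  assumes "prime p" "odd p" "\<not> fermat_prime p" "\<not> mersenne_prime p"
  shows "{n. two_p_smooth p n \<and> two_p_smooth p (n + 1)} = {1}"
proof -
  have "p - 1 \<noteq> 2 ^ k" for k
  proof
    assume k: "p - 1 = 2 ^ k"
    have "p \<noteq> 2" using assms(2) by auto
    with k have "k \<noteq> 0" by (cases k) auto
    moreover have "p = 2 ^ k + 1" using k prime_gt_0_nat[OF assms(1)] by simp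
    ultimately have "fermat_prime p"
      unfolding fermat_prime_def using assms(1) by (intro conjI exI[of _ k]) auto
    with assms(3) show False by simp
  qed
  moreover have "p + 1 \<noteq> 2 ^ k" for k
  proof
    assume k: "p + 1 = 2 ^ k"
    then have "k \<noteq> 0" using prime_gt_0_nat[OF assms(1)] by (cases k) auto
    moreover have "p = 2 ^ k - 1" using k by simp
    ultimately have "mersenne_prime p"
      unfolding mersenne_prime_def using assms(1) by (intro conjI exI[of _ k]) auto
    with assms(4) show False by simp
  qed
  moreover have "p \<noteq> 3" using assms(3) unfolding fermat_prime_def by auto
  ultimately show ?thesis
    unfolding set_eq_iff mem_Collect_eq consecutive_two_p_smooth_iff[OF assms(1,2)] by auto
qed

lemma E_fam_generic:
  assumes "prime p" "odd p" "\<not> fermat_prime p" "\<not> mersenne_prime p"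
  shows "E_fam p = {{2^a*p^b, 2^(a-1)*p^b} | a b. a \<ge> 1 \<and> b \<ge> 1}"
proof -
  have F: "{{2^a*p^b, 2^(a-1)*p^b} | a b. a \<ge> 1 \<and> b \<ge> 1} = pair_multiples p 2 1"
    by (rule pair_multiples_eqI) (simp add: mult_ac)
  show ?thesis
    unfolding F E_fam_eq_UN_consecutive[OF assms(1,2)] consecutive_two_p_smooth_generic[OF assms]
      UN_insert UN_empty one_add_one
    by simp
qed

theorem lemma3p18:
  fixes p :: nat
  assumes "prime p" and "odd p"
  shows
   "(p = 3 \<longrightarrow> E_fam 3 =
       {{2^(a-1)*3^b, 2^(a-1)*3^(b+1)} | a b. a \<ge> 1 \<and> b \<ge> 1}
     \<union> {{2^(a-1)*3^b, 2^(a-1)*3^(b+2)} | a b. a \<ge> 1 \<and> b \<ge> 1}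
     \<union> {{2^(a-1)*3^b, 2^a*3^b} | a b. a \<ge> 1 \<and> b \<ge> 1}
     \<union> {{2^(a-1)*3^b, 2^(a+1)*3^b} | a b. a \<ge> 1 \<and> b \<ge> 1}
     \<union> {{2^(a-1)*3^(b+1), 2^(a+1)*3^b} | a b. a \<ge> 1 \<and> b \<ge> 1}
     \<union> {{2^a*3^b, 2^(a-1)*3^(b+1)} | a b. a \<ge> 1 \<and> b \<ge> 1}
     \<union> {{2^(a+2)*3^b, 2^(a-1)*3^(b+2)} | a b. a \<ge> 1 \<and> b \<ge> 1})
  \<and> (\<forall>m::nat. m \<ge> 1 \<and> p = 2^m + 1 \<and> p > 3 \<longrightarrow> E_fam p =
       {{2^(a-1)*p^b, 2^(a-1)*p^(b+1)} | a b. a \<ge> 1 \<and> b \<ge> 1}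
     \<union> {{2^(a-1)*p^b, 2^a*p^b} | a b. a \<ge> 1 \<and> b \<ge> 1}
     \<union> {{2^(m+a-1)*p^b, 2^(a-1)*p^(b+1)} | a b. a \<ge> 1 \<and> b \<ge> 1})
  \<and> (\<forall>m::nat. m \<ge> 1 \<and> p = 2^m - 1 \<and> p > 3 \<longrightarrow> E_fam p =
       {{2^(a-1)*p^b, 2^a*p^b} | a b. a \<ge> 1 \<and> b \<ge> 1}
     \<union> {{2^(a-1)*p^b, 2^(m+a-1)*p^b} | a b. a \<ge> 1 \<and> b \<ge> 1}
     \<union> {{2^(a-1)*p^(b+1), 2^(m+a-1)*p^b} | a b. a \<ge> 1 \<and> b \<ge> 1})
  \<and> (\<not> fermat_prime p \<and> \<not> mersenne_prime p \<longrightarrow> E_fam p =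
       {{2^a*p^b, 2^(a-1)*p^b} | a b. a \<ge> 1 \<and> b \<ge> 1})"
  using E_fam_three E_fam_fermat[OF assms(1)] E_fam_mersenne[OF assms(1)] E_fam_generic[OF assms]
  by (intro conjI allI impI) auto

end
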